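(* Let $V$ be a filled sparsity pattern, $X\in\mathbb S^n_V$ positive definite and $Y\in\mathbb S^n_V$. For $t$ in a neighborhood of $0$ let $X+tY=L(t)D(t)L(t)^T$ be the factorization with $L(t)$ unit lower triangular and $D(t)$ positive diagonal, and for each vertex $i$ let $U_i(t)=-\sum_{k\in T_i}D_{kk}(t)L_{I_ik}(t)L_{I_ik}(t)^T$. Write $L=L(0)$, $D=D(0)$ and $L',D',U_i'$ for the derivatives at $t=0$. Then for every $j$, $$\begin{bmatrix}Y_{jj}&Y_{I_j j}^T\\ Y_{I_j j}&0\end{bmatrix}+\sum_{i\in\mathrm{ch}(j)}E_{I_j^+I_i}U_i'E_{I_j^+I_i}^T=\begin{bmatrix}1&0\\ L_{I_j j}&I\end{bmatrix}\begin{bmatrix}D_{jj}'&D_{jj}(L'_{I_j j})^T\\ D_{jj}L'_{I_j j}&U_j'\end{bmatrix}\begin{bmatrix}1&L_{I_j j}^T\\0&I\end{bmatrix}.$$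
   Context: A symmetric sparsity pattern $V$ is a set of pairs $(i,j)$ with $1\le j\le i\le n$ containing all $(i,i)$; it is filled (chordal) if $i>j>k$, $(i,k)\in V$, $(j,k)\in V$ imply $(i,j)\in V$. $\mathbb S^n_V$ is the set of real symmetric $n\times n$ matrices with $X_{ij}=X_{ji}=0$ whenever $i\ge j$ and $(i,j)\notin V$. For each $j$, $I_j=\{i>j:(i,j)\in V\}$, $I_j^+=\{j\}\cup I_j$. Elimination tree: the parent of $j$ is $\min I_j$ if $I_j\neq\emptyset$; $\mathrm{ch}(j)$ is the set of children of $j$ and $T_i$ the set consisting of $i$ and its descendants. It is known that $I_i\subseteq I_j^+$ for $i\in\mathrm{ch}(j)$ and that the Cholesky factor of a positive definite matrix in $\mathbb S^n_V$ has no nonzeros outside $V$. Index sets are sorted increasingly, $I(a)$ being the $a$-th element; for $J\subseteq I$, $E_{IJ}$ is the $|I|\times|J|$ matrix with $(E_{IJ})_{ab}=1$ iff $I(a)=J(b)$, else $0$. $A_{IJ}$ is the submatrix with rows $I$ and columns $J$; $A_{Ij}$ the part of column $j$ with rows in $I$. *)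

theory Defs
  imports "HOL-Analysis.Analysis" "Jordan_Normal_Form.Matrix"
begin

text \<open>Indices are 0-based: the vertices are 0,...,n-1 (the paper uses 1,...,n).\<close>

definition sym_pattern :: "nat \<Rightarrow> (nat \<times> nat) set \<Rightarrow> bool" where
  "sym_pattern n V \<longleftrightarrow> V \<subseteq> {(i,j). j \<le> i \<and> i < n} \<and> (\<forall>i<n. (i,i) \<in> V)"

definition filled :: "nat \<Rightarrow> (nat \<times> nat) set \<Rightarrow> bool" where
  "filled n V \<longleftrightarrow> sym_pattern n V \<and>
     (\<forall>i j k. i > j \<and> j > k \<and> (i,k) \<in> V \<and> (j,k) \<in> V \<longrightarrow> (i,j) \<in> V)"

definition in_SV :: "nat \<Rightarrow> (nat \<times> nat) set \<Rightarrow> real mat \<Rightarrow> bool" where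
  "in_SV n V X \<longleftrightarrow> X \<in> carrier_mat n n \<and> transpose_mat X = X \<and>
     (\<forall>i j. i < n \<and> j \<le> i \<and> (i,j) \<notin> V \<longrightarrow> X $$ (i,j) = 0 \<and> X $$ (j,i) = 0)"

definition pos_def :: "nat \<Rightarrow> real mat \<Rightarrow> bool" where
  "pos_def n X \<longleftrightarrow> X \<in> carrier_mat n n \<and> transpose_mat X = X \<and>
     (\<forall>v \<in> carrier_vec n. v \<noteq> 0\<^sub>v n \<longrightarrow> v \<bullet> (X *\<^sub>v v) > 0)"

definition unit_lower_tri :: "nat \<Rightarrow> real mat \<Rightarrow> bool" where
  "unit_lower_tri n L \<longleftrightarrow> L \<in> carrier_mat n n \<and> (\<forall>i<n. L $$ (i,i) = 1) \<and>
     (\<forall>i j. i < j \<and> j < n \<longrightarrow> L $$ (i,j) = 0)"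

definition pos_diag :: "nat \<Rightarrow> real mat \<Rightarrow> bool" where
  "pos_diag n D \<longleftrightarrow> D \<in> carrier_mat n n \<and> (\<forall>i<n. D $$ (i,i) > 0) \<and>
     (\<forall>i j. i < n \<and> j < n \<and> i \<noteq> j \<longrightarrow> D $$ (i,j) = 0)"

definition Iset :: "(nat \<times> nat) set \<Rightarrow> nat \<Rightarrow> nat set" where
  "Iset V j = {i. i > j \<and> (i,j) \<in> V}"

definition Iplus :: "(nat \<times> nat) set \<Rightarrow> nat \<Rightarrow> nat set" where
  "Iplus V j = insert j (Iset V j)"

definition parent_rel :: "nat \<Rightarrow> (nat \<times> nat) set \<Rightarrow> (nat \<times> nat) set" where
  "parent_rel n V = {(k, p). k < n \<and> Iset V k \<noteq> {} \<and> p = Min (Iset V k)}"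

definition children :: "nat \<Rightarrow> (nat \<times> nat) set \<Rightarrow> nat \<Rightarrow> nat set" where
  "children n V j = {i. (i, j) \<in> parent_rel n V}"

definition subtree :: "nat \<Rightarrow> (nat \<times> nat) set \<Rightarrow> nat \<Rightarrow> nat set" where
  "subtree n V i = {k. (k, i) \<in> (parent_rel n V)\<^sup>*}"

definition idx :: "nat set \<Rightarrow> nat \<Rightarrow> nat" where
  "idx I a = sorted_list_of_set I ! a"

definition Emat :: "nat set \<Rightarrow> nat set \<Rightarrow> real mat" where
  "Emat I J = mat (card I) (card J) (\<lambda>(a,b). if idx I a = idx J b then 1 else 0)"

text \<open>Submatrix A_{IJ}; A_{Ij} is subm A I {j}.\<close>
definition subm :: "real mat \<Rightarrow> nat set \<Rightarrow> nat set \<Rightarrow> real mat" where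
  "subm A I J = mat (card I) (card J) (\<lambda>(a,b). A $$ (idx I a, idx J b))"

definition msum :: "nat \<Rightarrow> nat set \<Rightarrow> (nat \<Rightarrow> real mat) \<Rightarrow> real mat" where
  "msum m S f = mat m m (\<lambda>(a,b). \<Sum>i\<in>S. f i $$ (a,b))"

definition Umat :: "nat \<Rightarrow> (nat \<times> nat) set \<Rightarrow> (real \<Rightarrow> real mat) \<Rightarrow> (real \<Rightarrow> real mat)
    \<Rightarrow> nat \<Rightarrow> real \<Rightarrow> real mat" where
  "Umat n V L D i t = - msum (card (Iset V i)) (subtree n V i)
     (\<lambda>k. (D t $$ (k,k)) \<cdot>\<^sub>m (subm (L t) (Iset V i) {k} * transpose_mat (subm (L t) (Iset V i) {k})))"

definition mderiv0 :: "(real \<Rightarrow> real mat) \<Rightarrow> real mat" where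
  "mderiv0 M = mat (dim_row (M 0)) (dim_col (M 0)) (\<lambda>(a,b). deriv (\<lambda>t. M t $$ (a,b)) 0)"

end

theory Submission
  imports Defs
begin

text \<open>
  The identity is proved entry by entry. For \<open>p, q \<in> I\<^sub>j\<^sup>+\<close> let \<open>\<delta>\<^sub>k(p,q)\<close> be the derivative at
  \<open>t = 0\<close> of the rank-one term \<open>D\<^sub>k\<^sub>k(t) L\<^sub>p\<^sub>k(t) L\<^sub>q\<^sub>k(t)\<close>, so that \<open>U\<^sub>i' = -\<Sum>\<^bsub>k\<in>T\<^sub>i\<^esub> \<delta>\<^sub>k\<close>.

  The first part is combinatorics of the elimination tree of a filled pattern: a nonzero
  \<open>(j,k)\<close> with \<open>k < j\<close> has \<open>k \<in> T\<^sub>j\<close>; for \<open>k \<in> T\<^sub>i\<close>, the part of \<open>I\<^sub>k\<close> above \<open>i\<close> lies in \<open>I\<^sub>i\<close>;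
  and \<open>T\<^sub>j - {j}\<close> is the disjoint union of the subtrees of the children of \<open>j\<close>.
  The third part (locale \<open>ldl_family\<close>) studies the given family of factorizations: \<open>L(t)\<close>
  has no fill, its entries are differentiable by the column recurrences, and differentiating
  \<open>X + tY = L D L\<^sup>T\<close> gives \<open>Y\<^sub>p\<^sub>q = \<Sum>\<^sub>k \<delta>\<^sub>k(p,q)\<close>, where only \<open>k \<in> T\<^sub>j\<close> contribute if \<open>j \<in> {p,q}\<close>.
  At position \<open>(p,q)\<close> the left-hand side is then \<open>[j \<in> {p,q}] Y\<^sub>p\<^sub>q - \<Sum>\<^bsub>k\<in>T\<^sub>j-{j}\<^esub> \<delta>\<^sub>k(p,q)\<close>
  and the right-hand side is \<open>\<delta>\<^sub>j(p,q) - [j \<notin> {p,q}] \<Sum>\<^bsub>k\<in>T\<^sub>j\<^esub> \<delta>\<^sub>k(p,q)\<close>, which agree.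
\<close>

section \<open>Sorted enumeration of finite index sets\<close>

lemma idx_in: "finite S \<Longrightarrow> a < card S \<Longrightarrow> idx S a \<in> S"
  unfolding idx_def by (metis length_sorted_list_of_set nth_mem set_sorted_list_of_set)

lemma idx_single [simp]: "idx {k} 0 = k"
  unfolding idx_def by simp

lemma sum_idx: "finite S \<Longrightarrow> (\<Sum>c<card S. g (idx S c)) = sum g S"
proof -
  assume fin: "finite S"
  let ?xs = "sorted_list_of_set S"
  have "sum g S = sum_list (map g ?xs)"
    using fin by (simp add: sum_list_distinct_conv_sum_set)
  also have "\<dots> = (\<Sum>i = 0..<length ?xs. map g ?xs ! i)"
    using sum_list_sum_nth[of "map g ?xs"] by simp
  also have "\<dots> = (\<Sum>c<card S. g (idx S c))"
    using fin by (auto simp: idx_def atLeast0LessThan intro!: sum.cong)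
  finally show ?thesis by simp
qed

lemma sum_idx_delta:
  "finite S \<Longrightarrow> (\<Sum>c<card S. if p = idx S c then F (idx S c) else 0) = (if p \<in> S then F p else (0::real))"
  using sum_idx[of S "\<lambda>s. if p = s then F s else 0"] by (simp add: sum.delta)

lemma idx_insert_min:
  assumes fin: "finite S" and gt: "\<forall>s\<in>S. j < s"
  shows "idx (insert j S) 0 = j" "idx (insert j S) (Suc a) = idx S a"
    "card (insert j S) = Suc (card S)"
proof -
  have "Min (insert j S) = j" using fin gt by (simp add: Min_insert2 less_imp_le)
  moreover have "insert j S - {j} = S" using gt by auto
  ultimately have "sorted_list_of_set (insert j S) = j # sorted_list_of_set S"
    using sorted_list_of_set_nonempty[of "insert j S"] fin by simp
  then show "idx (insert j S) 0 = j" "idx (insert j S) (Suc a) = idx S a"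
    "card (insert j S) = Suc (card S)"
    using fin gt unfolding idx_def by (auto simp: card_insert_if)
qed

section \<open>The elimination tree of a filled pattern\<close>

lemma V_bound: "filled n V \<Longrightarrow> (i,j) \<in> V \<Longrightarrow> j \<le> i \<and> i < n"
  unfolding filled_def sym_pattern_def by blast

lemma filledD:
  "filled n V \<Longrightarrow> i > j \<Longrightarrow> j > k \<Longrightarrow> (i,k) \<in> V \<Longrightarrow> (j,k) \<in> V \<Longrightarrow> (i,j) \<in> V"
  unfolding filled_def by blast

lemma Iset_bound: "filled n V \<Longrightarrow> i \<in> Iset V j \<Longrightarrow> j < i \<and> i < n"
  unfolding Iset_def using V_bound by blast

lemma Iset_finite: "filled n V \<Longrightarrow> finite (Iset V j)"
  by (rule finite_subset[of _ "{..<n}"]) (auto dest: Iset_bound)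

lemma Iplus_enum:
  assumes "filled n V"
  shows "card (Iplus V j) = Suc (card (Iset V j))" "idx (Iplus V j) 0 = j"
    "idx (Iplus V j) (Suc a) = idx (Iset V j) a"
  using idx_insert_min[OF Iset_finite[OF assms], of j] Iset_bound[OF assms]
  unfolding Iplus_def by auto

lemma Iplus_finite: "filled n V \<Longrightarrow> finite (Iplus V j)"
  unfolding Iplus_def using Iset_finite by blast

lemma parent_props:
  assumes f: "filled n V" and kp: "(k,p) \<in> parent_rel n V"
  shows "k < p" "p < n" "p \<in> Iset V k" "\<And>q. q \<in> Iset V k \<Longrightarrow> p \<le> q"
proof -
  have fin: "finite (Iset V k)" using Iset_finite[OF f] .
  have ne: "Iset V k \<noteq> {}" and p: "p = Min (Iset V k)" using kp unfolding parent_rel_def by auto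
  show pin: "p \<in> Iset V k" using Min_in[OF fin ne] p by simp
  then show "k < p" "p < n" using Iset_bound[OF f] by auto
  show "\<And>q. q \<in> Iset V k \<Longrightarrow> p \<le> q" using p fin by simp
qed

lemma parent_unique: "(k,p) \<in> parent_rel n V \<Longrightarrow> (k,p') \<in> parent_rel n V \<Longrightarrow> p = p'"
  unfolding parent_rel_def by auto

lemma subtree_self: "j \<in> subtree n V j"
  unfolding subtree_def by auto

lemma subtree_le:
  assumes f: "filled n V" and k: "k \<in> subtree n V i"
  shows "k \<le> i"
proof -
  have "(k,i) \<in> (parent_rel n V)\<^sup>*" using k unfolding subtree_def by auto
  then show ?thesis
    by (induction rule: converse_rtrancl_induct) (use parent_props(1)[OF f] in force)+
qed

lemma subtree_finite: "filled n V \<Longrightarrow> finite (subtree n V i)"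
  by (rule finite_subset[of _ "{..i}"]) (auto dest: subtree_le)

lemma children_props: "filled n V \<Longrightarrow> c \<in> children n V j \<Longrightarrow> c < j \<and> j < n \<and> j \<in> Iset V c"
  unfolding children_def using parent_props by blast

lemma children_finite: "filled n V \<Longrightarrow> finite (children n V j)"
  by (rule finite_subset[of _ "{..<n}"]) (auto dest: children_props)

text \<open>The known inclusion \<open>I\<^sub>k \<subseteq> I\<^sub>p\<^sup>+\<close> for the parent \<open>p\<close> of \<open>k\<close>; this is where
  filledness enters.\<close>
lemma Iset_sub_Iplus_parent:
  assumes f: "filled n V" and kp: "(k,p) \<in> parent_rel n V" and q: "q \<in> Iset V k"
  shows "q \<in> Iplus V p"
proof (cases "q = p")
  case False
  note P = parent_props[OF f kp]
  have "q > p" using P(4)[OF q] False by simp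
  moreover have "(q,k) \<in> V" "(p,k) \<in> V" using q P(3) unfolding Iset_def by auto
  ultimately have "(q,p) \<in> V" using filledD[OF f] P(1) by blast
  then show ?thesis using \<open>q > p\<close> unfolding Iplus_def Iset_def by auto
qed (simp add: Iplus_def)

text \<open>Iterating along the path to an ancestor \<open>i\<close>: the part of \<open>I\<^sub>k\<close> above \<open>i\<close> lies in \<open>I\<^sub>i\<close>.\<close>
lemma Iset_descendant:
  assumes f: "filled n V" and k: "k \<in> subtree n V i" and q: "q \<in> Iset V k" "i < q"
  shows "q \<in> Iset V i"
proof -
  have "(k,i) \<in> (parent_rel n V)\<^sup>*" using k unfolding subtree_def by auto
  then show ?thesis using q
  proof (induction arbitrary: q rule: converse_rtrancl_induct)
    case (step k p)
    have "p \<le> i" using subtree_le[OF f, of p i] step.hyps(2) unfolding subtree_def by auto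
    then have "q \<in> Iset V p"
      using Iset_sub_Iplus_parent[OF f step.hyps(1) step.prems(1)] step.prems(2)
      unfolding Iplus_def by auto
    then show ?case using step.IH step.prems(2) by blast
  qed simp
qed

lemma nonzero_in_subtree:
  assumes f: "filled n V"
  shows "(j,k) \<in> V \<Longrightarrow> k < j \<Longrightarrow> k \<in> subtree n V j"
proof (induction "j - k" arbitrary: k rule: less_induct)
  case less
  have jI: "j \<in> Iset V k" using less.prems unfolding Iset_def by auto
  define p where "p = Min (Iset V k)"
  have "k < n" using less.prems V_bound[OF f less.prems(1)] by simp
  then have kp: "(k,p) \<in> parent_rel n V" unfolding parent_rel_def p_def using jI by auto
  note P = parent_props[OF f kp]
  show ?case
  proof (cases "p = j")
    case True then show ?thesis using kp unfolding subtree_def by auto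
  next
    case False
    have "p < j" using P(4)[OF jI] False by simp
    moreover have "(p,k) \<in> V" using P(3) unfolding Iset_def by auto
    ultimately have "(j,p) \<in> V" using filledD[OF f] P(1) less.prems(1) by blast
    then have "p \<in> subtree n V j" using less.hyps[of p] P(1) \<open>p < j\<close> by auto
    then show ?thesis using kp unfolding subtree_def by (auto intro: converse_rtrancl_into_rtrancl)
  qed
qed

text \<open>Since parents are unique, the ancestors of a vertex form a chain.\<close>
lemma ancestors_chain:
  assumes f: "filled n V"
  shows "(k,a) \<in> (parent_rel n V)\<^sup>* \<Longrightarrow> (k,b) \<in> (parent_rel n V)\<^sup>* \<Longrightarrow> a \<le> b
    \<Longrightarrow> (a,b) \<in> (parent_rel n V)\<^sup>*"
proof (induction rule: converse_rtrancl_induct)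
  case (step k p)
  from step.prems(1) show ?case
  proof (cases rule: converse_rtranclE)
    case base
    have "p \<le> a" using subtree_le[OF f, of p a] step.hyps(2) unfolding subtree_def by auto
    then show ?thesis using parent_props(1)[OF f step.hyps(1)] base step.prems(2) by auto
  next
    case (step p')
    then have "p' = p" using parent_unique step.hyps(1) by metis
    then show ?thesis using step.IH step \<open>a \<le> b\<close> by auto
  qed
qed simp

lemma subtrees_disjoint:
  assumes f: "filled n V" and c1: "c1 \<in> children n V j" and c2: "c2 \<in> children n V j"
    and ne: "c1 \<noteq> c2"
  shows "subtree n V c1 \<inter> subtree n V c2 = {}"
proof (rule ccontr)
  assume "subtree n V c1 \<inter> subtree n V c2 \<noteq> {}"
  then obtain k where k1: "(k,c1) \<in> (parent_rel n V)\<^sup>*" and k2: "(k,c2) \<in> (parent_rel n V)\<^sup>*"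
    unfolding subtree_def by blast
  have no_path: "False" if a: "a \<in> children n V j" and b: "b \<in> children n V j" and ab: "a \<noteq> b"
      and r: "(a,b) \<in> (parent_rel n V)\<^sup>*" for a b
  proof -
    obtain x where ax: "(a,x) \<in> parent_rel n V" and xb: "(x,b) \<in> (parent_rel n V)\<^sup>*"
      using r ab by (metis converse_rtranclE)
    have "x = j" using parent_unique[OF ax] a unfolding children_def by simp
    then have "j \<le> b" using subtree_le[OF f] xb unfolding subtree_def by blast
    then show False using children_props[OF f b] by simp
  qed
  show False
  proof (cases "c1 \<le> c2")
    case True then show False using no_path[OF c1 c2 ne ancestors_chain[OF f k1 k2 True]] by simp
  next
    case False
    then show False using no_path[OF c2 c1 ne[symmetric] ancestors_chain[OF f k2 k1]] by simp
  qed
qed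

lemma subtree_decomp:
  assumes f: "filled n V"
  shows "subtree n V j - {j} = (\<Union>c\<in>children n V j. subtree n V c)"
proof
  show "subtree n V j - {j} \<subseteq> (\<Union>c\<in>children n V j. subtree n V c)"
  proof
    fix k assume "k \<in> subtree n V j - {j}"
    then have r: "(k,j) \<in> (parent_rel n V)\<^sup>*" and kj: "k \<noteq> j" unfolding subtree_def by auto
    from r kj obtain c where "(k,c) \<in> (parent_rel n V)\<^sup>*" "(c,j) \<in> parent_rel n V"
      by (metis rtranclE)
    then show "k \<in> (\<Union>c\<in>children n V j. subtree n V c)"
      unfolding subtree_def children_def by auto
  qed
next
  show "(\<Union>c\<in>children n V j. subtree n V c) \<subseteq> subtree n V j - {j}"
  proof
    fix k assume "k \<in> (\<Union>c\<in>children n V j. subtree n V c)"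
    then obtain c where c: "c \<in> children n V j" and k: "k \<in> subtree n V c" by auto
    have "k < j" using subtree_le[OF f k] children_props[OF f c] by auto
    moreover have "(k,j) \<in> (parent_rel n V)\<^sup>*" using c k unfolding subtree_def children_def by auto
    ultimately show "k \<in> subtree n V j - {j}" unfolding subtree_def by auto
  qed
qed

lemma sum_subtree_children:
  assumes f: "filled n V"
  shows "sum g (subtree n V j - {j}) = (\<Sum>c\<in>children n V j. sum g (subtree n V c))"
  unfolding subtree_decomp[OF f]
  by (rule sum.UNION_disjoint)
     (auto simp: children_finite[OF f] subtree_finite[OF f] dest: subtrees_disjoint[OF f])

section \<open>Entries of the block matrices in the identity\<close>

lemma block_LDLt_entry:
  fixes l l' Dm U :: "real mat" and d :: real
  assumes l: "l \<in> carrier_mat m 1" and l': "l' \<in> carrier_mat m 1" and Dm: "Dm \<in> carrier_mat 1 1"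
    and U: "U \<in> carrier_mat m m" and a: "a < Suc m" and b: "b < Suc m"
  shows "(four_block_mat (1\<^sub>m 1) (0\<^sub>m 1 m) l (1\<^sub>m m)
        * four_block_mat Dm (d \<cdot>\<^sub>m transpose_mat l') (d \<cdot>\<^sub>m l') U
        * four_block_mat (1\<^sub>m 1) (transpose_mat l) (0\<^sub>m m 1) (1\<^sub>m m)) $$ (a,b)
     = Dm $$ (0,0) * (if a = 0 then 1 else l $$ (a-1,0)) * (if b = 0 then 1 else l $$ (b-1,0))
       + d * (if a = 0 then 0 else l' $$ (a-1,0)) * (if b = 0 then 1 else l $$ (b-1,0))
       + d * (if a = 0 then 1 else l $$ (a-1,0)) * (if b = 0 then 0 else l' $$ (b-1,0))
       + (if 0 < a \<and> 0 < b then U $$ (a-1,b-1) else 0)"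
proof -
  let ?A = "1\<^sub>m 1 * Dm + 0\<^sub>m 1 m * (d \<cdot>\<^sub>m l')"
    and ?B = "1\<^sub>m 1 * (d \<cdot>\<^sub>m transpose_mat l') + 0\<^sub>m 1 m * U"
    and ?C = "l * Dm + 1\<^sub>m m * (d \<cdot>\<^sub>m l')"
    and ?D = "l * (d \<cdot>\<^sub>m transpose_mat l') + 1\<^sub>m m * U"
  have left: "four_block_mat (1\<^sub>m 1) (0\<^sub>m 1 m) l (1\<^sub>m m)
        * four_block_mat Dm (d \<cdot>\<^sub>m transpose_mat l') (d \<cdot>\<^sub>m l') U = four_block_mat ?A ?B ?C ?D"
    by (rule mult_four_block_mat) (use l l' Dm U in auto)
  have right: "four_block_mat ?A ?B ?C ?D * four_block_mat (1\<^sub>m 1) (transpose_mat l) (0\<^sub>m m 1) (1\<^sub>m m)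
    = four_block_mat (?A * 1\<^sub>m 1 + ?B * 0\<^sub>m m 1) (?A * transpose_mat l + ?B * 1\<^sub>m m)
        (?C * 1\<^sub>m 1 + ?D * 0\<^sub>m m 1) (?C * transpose_mat l + ?D * 1\<^sub>m m)"
    by (rule mult_four_block_mat) (use l l' Dm U in auto)
  show ?thesis
    unfolding left right using l l' Dm U a b
    by (simp add: scalar_prod_def) (auto simp: algebra_simps)
qed

lemma Emat_entry:
  "x < card I \<Longrightarrow> y < card J \<Longrightarrow> Emat I J $$ (x,y) = (if idx I x = idx J y then 1 else 0)"
  "dim_row (Emat I J) = card I" "dim_col (Emat I J) = card J"
  unfolding Emat_def by auto

text \<open>Extend-add: if \<open>U\<close> is indexed by \<open>J\<close> with entries \<open>G\<close>, then \<open>E\<^sub>I\<^sub>J U E\<^sub>I\<^sub>J\<^sup>T\<close>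
  carries these entries to the positions of \<open>J\<close> inside \<open>I\<close> and is zero elsewhere.\<close>
lemma extend_add_entry:
  assumes fin: "finite J" and U: "U \<in> carrier_mat (card J) (card J)"
    and G: "\<And>c e. c < card J \<Longrightarrow> e < card J \<Longrightarrow> U $$ (c,e) = G (idx J c) (idx J e)"
    and a: "a < card I" and b: "b < card I"
  shows "(Emat I J * U * transpose_mat (Emat I J)) $$ (a,b)
     = (if idx I a \<in> J \<and> idx I b \<in> J then G (idx I a) (idx I b) else 0)"
proof -
  let ?p = "idx I a" and ?q = "idx I b"
  have EU: "(Emat I J * U) $$ (a,e) = (if ?p \<in> J then G ?p (idx J e) else 0)"
    if e: "e < card J" for e
  proof -
    have "(Emat I J * U) $$ (a,e) = (\<Sum>c\<in>{0..<card J}. Emat I J $$ (a,c) * U $$ (c,e))"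
      using U a e by (simp add: scalar_prod_def Emat_entry)
    also have "\<dots> = (\<Sum>c<card J. if ?p = idx J c then G (idx J c) (idx J e) else 0)"
      using a e by (auto simp: Emat_entry G atLeast0LessThan intro!: sum.cong)
    also have "\<dots> = (if ?p \<in> J then G ?p (idx J e) else 0)"
      using sum_idx_delta[OF fin, of ?p "\<lambda>s. G s (idx J e)"] by simp
    finally show ?thesis .
  qed
  have "(Emat I J * U * transpose_mat (Emat I J)) $$ (a,b)
      = (\<Sum>e\<in>{0..<card J}. (Emat I J * U) $$ (a,e) * Emat I J $$ (b,e))"
    using U a b by (simp add: scalar_prod_def Emat_entry)
  also have "\<dots> = (\<Sum>e<card J. if ?q = idx J e then (if ?p \<in> J then G ?p (idx J e) else 0) else 0)"
    using a b by (auto simp: Emat_entry EU atLeast0LessThan intro!: sum.cong)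
  also have "\<dots> = (if ?q \<in> J then (if ?p \<in> J then G ?p ?q else 0) else 0)"
    using sum_idx_delta[OF fin, of ?q "\<lambda>s. if ?p \<in> J then G ?p s else 0"] by simp
  finally show ?thesis by auto
qed

lemma subm_column_Iplus:
  assumes f: "filled n V" and a: "a < Suc (card (Iset V j))"
  shows "(if a = 0 then M $$ (j,j) else subm M (Iset V j) {j} $$ (a-1,0)) = M $$ (idx (Iplus V j) a, j)"
  using a Iplus_enum[OF f, of j] by (cases a) (auto simp: subm_def)

definition frontal_lhs :: "nat \<Rightarrow> (nat \<times> nat) set \<Rightarrow> real mat \<Rightarrow> (real \<Rightarrow> real mat)
    \<Rightarrow> (real \<Rightarrow> real mat) \<Rightarrow> nat \<Rightarrow> real mat" where
  "frontal_lhs n V Y L D j =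
      four_block_mat (subm Y {j} {j}) (transpose_mat (subm Y (Iset V j) {j}))
                     (subm Y (Iset V j) {j}) (0\<^sub>m (card (Iset V j)) (card (Iset V j)))
      + msum (card (Iplus V j)) (children n V j)
          (\<lambda>i. Emat (Iplus V j) (Iset V i) * mderiv0 (Umat n V L D i)
                 * transpose_mat (Emat (Iplus V j) (Iset V i)))"

definition frontal_rhs :: "nat \<Rightarrow> (nat \<times> nat) set \<Rightarrow> (real \<Rightarrow> real mat)
    \<Rightarrow> (real \<Rightarrow> real mat) \<Rightarrow> nat \<Rightarrow> real mat" where
  "frontal_rhs n V L D j =
        four_block_mat (1\<^sub>m 1) (0\<^sub>m 1 (card (Iset V j)))
                       (subm (L 0) (Iset V j) {j}) (1\<^sub>m (card (Iset V j)))
        * four_block_mat (subm (mderiv0 D) {j} {j})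
                         ((D 0 $$ (j,j)) \<cdot>\<^sub>m transpose_mat (subm (mderiv0 L) (Iset V j) {j}))
                         ((D 0 $$ (j,j)) \<cdot>\<^sub>m subm (mderiv0 L) (Iset V j) {j})
                         (mderiv0 (Umat n V L D j))
        * four_block_mat (1\<^sub>m 1) (transpose_mat (subm (L 0) (Iset V j) {j}))
                         (0\<^sub>m (card (Iset V j)) 1) (1\<^sub>m (card (Iset V j)))"

section \<open>Differentiating the factorization\<close>

text \<open>A family \<open>X + tY = L(t) D(t) L(t)\<^sup>T\<close>, \<open>|t| < \<epsilon>\<close>, of factorizations with unit lower
  triangular \<open>L(t)\<close> and positive diagonal \<open>D(t)\<close>.\<close>
locale ldl_family =
  fixes n :: nat and V :: "(nat \<times> nat) set" and X Y :: "real mat"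
    and L D :: "real \<Rightarrow> real mat" and \<epsilon> :: real
  assumes fil: "filled n V" and X_SV: "in_SV n V X" and Y_SV: "in_SV n V Y" and eps: "\<epsilon> > 0"
    and fac: "\<And>t. \<bar>t\<bar> < \<epsilon> \<Longrightarrow> unit_lower_tri n (L t) \<and> pos_diag n (D t) \<and>
                         X + t \<cdot>\<^sub>m Y = L t * D t * transpose_mat (L t)"
begin

lemma fac_props:
  assumes "\<bar>t\<bar> < \<epsilon>"
  shows "L t \<in> carrier_mat n n" "D t \<in> carrier_mat n n"
    "\<And>i. i < n \<Longrightarrow> L t $$ (i,i) = 1"
    "\<And>i j. i < j \<Longrightarrow> j < n \<Longrightarrow> L t $$ (i,j) = 0"
    "\<And>i. i < n \<Longrightarrow> D t $$ (i,i) > 0"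
    "\<And>i j. i < n \<Longrightarrow> j < n \<Longrightarrow> i \<noteq> j \<Longrightarrow> D t $$ (i,j) = 0"
    "X + t \<cdot>\<^sub>m Y = L t * D t * transpose_mat (L t)"
  using fac[OF assms] unfolding unit_lower_tri_def pos_diag_def by auto

lemma XY_carrier: "X \<in> carrier_mat n n" "Y \<in> carrier_mat n n"
  using X_SV Y_SV unfolding in_SV_def by auto

lemma Y_sym: "p < n \<Longrightarrow> q < n \<Longrightarrow> Y $$ (q,p) = Y $$ (p,q)"
  using Y_SV XY_carrier(2) unfolding in_SV_def by (metis carrier_matD index_transpose_mat(1))

lemma factor_entry:
  assumes t: "\<bar>t\<bar> < \<epsilon>" and p: "p < n" and q: "q < n"
  shows "X $$ (p,q) + t * Y $$ (p,q) = (\<Sum>k<n. D t $$ (k,k) * L t $$ (p,k) * L t $$ (q,k))"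
proof -
  note P = fac_props[OF t]
  have LD: "(L t * D t) $$ (p,k) = L t $$ (p,k) * D t $$ (k,k)" if k: "k < n" for k
  proof -
    have "(L t * D t) $$ (p,k) = (\<Sum>i\<in>{0..<n}. L t $$ (p,i) * D t $$ (i,k))"
      using P(1,2) p k by (simp add: scalar_prod_def)
    also have "\<dots> = (\<Sum>i\<in>{0..<n}. if i = k then L t $$ (p,k) * D t $$ (k,k) else 0)"
      by (rule sum.cong) (use P(6) k in auto)
    finally show ?thesis using k by simp
  qed
  have "(L t * D t * transpose_mat (L t)) $$ (p,q) = row (L t * D t) p \<bullet> col (transpose_mat (L t)) q"
    using P(1,2) p q by (intro index_mult_mat(1)) auto
  also have "\<dots> = (\<Sum>k\<in>{0..<n}. (L t * D t) $$ (p,k) * L t $$ (q,k))"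
    unfolding scalar_prod_def using P(1,2) p q by (intro sum.cong) auto
  also have "\<dots> = (\<Sum>k<n. D t $$ (k,k) * L t $$ (p,k) * L t $$ (q,k))"
    by (rule sum.cong) (auto simp: LD)
  moreover have "(X + t \<cdot>\<^sub>m Y) $$ (p,q) = X $$ (p,q) + t * Y $$ (p,q)"
    using XY_carrier p q by simp
  ultimately show ?thesis using P(7) by simp
qed

lemma factor_entry_lower:
  assumes t: "\<bar>t\<bar> < \<epsilon>" and ji: "j \<le> i" and i: "i < n"
  shows "X $$ (i,j) + t * Y $$ (i,j)
    = L t $$ (i,j) * D t $$ (j,j) + (\<Sum>k<j. D t $$ (k,k) * L t $$ (i,k) * L t $$ (j,k))"
proof -
  note P = fac_props[OF t]
  have "(\<Sum>k<n. D t $$ (k,k) * L t $$ (i,k) * L t $$ (j,k))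
      = (\<Sum>k<Suc j. D t $$ (k,k) * L t $$ (i,k) * L t $$ (j,k))"
    by (rule sum.mono_neutral_right) (use ji i P(4) in auto)
  also have "\<dots> = L t $$ (i,j) * D t $$ (j,j) + (\<Sum>k<j. D t $$ (k,k) * L t $$ (i,k) * L t $$ (j,k))"
    using P(3) ji i by simp
  finally show ?thesis using factor_entry[OF t i, of j] ji i by simp
qed

lemma no_fill:
  assumes t: "\<bar>t\<bar> < \<epsilon>"
  shows "i < n \<Longrightarrow> j < i \<Longrightarrow> (i,j) \<notin> V \<Longrightarrow> L t $$ (i,j) = 0"
proof (induction j arbitrary: i rule: less_induct)
  case (less j)
  have XY0: "X $$ (i,j) = 0" "Y $$ (i,j) = 0" using X_SV Y_SV less.prems unfolding in_SV_def by auto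
  have term0: "D t $$ (k,k) * L t $$ (i,k) * L t $$ (j,k) = 0" if k: "k < j" for k
  proof (cases "(i,k) \<in> V \<and> (j,k) \<in> V")
    case True
    then have "(i,j) \<in> V" using filledD[OF fil, of j i k] k less.prems by auto
    then show ?thesis using less.prems by simp
  next
    case False
    then show ?thesis using less.IH[of k] k less.prems by auto
  qed
  then have "(\<Sum>k<j. D t $$ (k,k) * L t $$ (i,k) * L t $$ (j,k)) = 0"
    by (intro sum.neutral) simp
  then have "L t $$ (i,j) * D t $$ (j,j) = 0"
    using factor_entry_lower[OF t, of j i] less.prems XY0 by simp
  then show ?case using fac_props(5)[OF t, of j] less.prems by simp
qed

lemma L_zero_outside:
  "p < n \<Longrightarrow> k < n \<Longrightarrow> p \<noteq> k \<Longrightarrow> p < k \<or> (p,k) \<notin> V \<Longrightarrow> \<bar>t\<bar> < \<epsilon> \<Longrightarrow> L t $$ (p,k) = 0"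
  using fac_props(4) no_fill by (metis linorder_neqE_nat)

lemma pivot_recurrence:
  assumes t: "\<bar>t\<bar> < \<epsilon>" and j: "j < n"
  shows "D t $$ (j,j)
    = (X $$ (j,j) + t * Y $$ (j,j)) - (\<Sum>k<j. D t $$ (k,k) * L t $$ (j,k) * L t $$ (j,k))"
  using factor_entry_lower[OF t order.refl j] fac_props(3)[OF t j] by simp

lemma multiplier_recurrence:
  assumes t: "\<bar>t\<bar> < \<epsilon>" and ji: "j \<le> i" and i: "i < n"
  shows "L t $$ (i,j) = ((X $$ (i,j) + t * Y $$ (i,j))
                    - (\<Sum>k<j. D t $$ (k,k) * L t $$ (i,k) * L t $$ (j,k))) / D t $$ (j,j)"
proof -
  have "D t $$ (j,j) \<noteq> 0" using fac_props(5)[OF t, of j] ji i by simp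
  then show ?thesis using factor_entry_lower[OF t ji i] by (simp add: eq_divide_eq)
qed

lemma differentiable_near:
  assumes "\<And>t. \<bar>t\<bar> < \<epsilon> \<Longrightarrow> f t = g t" and "g differentiable (at 0)"
  shows "f differentiable (at (0::real))"
proof -
  obtain g' where "(g has_derivative g') (at 0)" using assms(2) unfolding differentiable_def by auto
  then have "(f has_derivative g') (at 0)"
    by (rule has_derivative_transform_within_open[where s="ball 0 \<epsilon>"])
       (use assms(1) eps in \<open>auto simp: dist_real_def\<close>)
  then show ?thesis unfolding differentiable_def by auto
qed

lemma deriv_near:
  assumes "\<And>t. \<bar>t\<bar> < \<epsilon> \<Longrightarrow> f t = g t" and "(g has_real_derivative g') (at 0)"
  shows "(f has_real_derivative g') (at (0::real))"
  by (rule has_field_derivative_transform_within_open[where S="ball 0 \<epsilon>", OF assms(2)])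
     (use assms(1) eps in \<open>auto simp: dist_real_def\<close>)

lemma const_near:
  assumes "\<And>t. \<bar>t\<bar> < \<epsilon> \<Longrightarrow> f t = c"
  shows "(f has_real_derivative 0) (at (0::real))" "f (0::real) = c"
  using deriv_near[of f "\<lambda>_. c" 0] assms eps by auto

lemma const_near_differentiable:
  fixes f :: "real \<Rightarrow> real"
  assumes "\<And>t. \<bar>t\<bar> < \<epsilon> \<Longrightarrow> f t = c"
  shows "f differentiable (at (0::real))"
proof -
  have "(f has_real_derivative 0) (at 0)" by (rule const_near(1)) (rule assms)
  then show ?thesis using real_differentiable_def by blast
qed

lemma XY_deriv: "((\<lambda>t. X $$ (i,j) + t * Y $$ (i,j)) has_real_derivative Y $$ (i,j)) (at (0::real))"
  using DERIV_add[OF DERIV_const DERIV_cmult_right[OF DERIV_ident, of "Y $$ (i,j)"], of "X $$ (i,j)"]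
  by simp

lemma XY_differentiable: "(\<lambda>t. X $$ (i,j) + t * Y $$ (i,j)) differentiable (at (0::real))"
  using XY_deriv real_differentiable_def by blast

text \<open>By the recurrences and induction on the column, all entries are differentiable.\<close>
lemma column_differentiable:
  "j < n \<Longrightarrow> (\<forall>i<n. (\<lambda>t. L t $$ (i,j)) differentiable (at 0)) \<and> (\<lambda>t. D t $$ (j,j)) differentiable (at 0)"
proof (induction j rule: less_induct)
  case (less j)
  have sum_diff: "(\<lambda>t. \<Sum>k<j. D t $$ (k,k) * L t $$ (i,k) * L t $$ (j,k)) differentiable (at 0)"
    if "i < n" for i
    using less.IH less.prems that by (intro differentiable_sum differentiable_mult) auto
  have D_diff: "(\<lambda>t. D t $$ (j,j)) differentiable (at 0)"
  proof (rule differentiable_near)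
    show "D t $$ (j,j) = (X $$ (j,j) + t * Y $$ (j,j))
        - (\<Sum>k<j. D t $$ (k,k) * L t $$ (j,k) * L t $$ (j,k))" if "\<bar>t\<bar> < \<epsilon>" for t
      using pivot_recurrence[OF that less.prems] .
    show "(\<lambda>t. (X $$ (j,j) + t * Y $$ (j,j))
        - (\<Sum>k<j. D t $$ (k,k) * L t $$ (j,k) * L t $$ (j,k))) differentiable (at 0)"
      using sum_diff[OF less.prems] XY_differentiable by (intro differentiable_diff)
  qed
  have D0: "D 0 $$ (j,j) \<noteq> 0" using fac_props(5)[of 0 j] eps less.prems by auto
  have "(\<lambda>t. L t $$ (i,j)) differentiable (at 0)" if i: "i < n" for i
  proof (cases "i < j")
    case True
    show ?thesis
      by (rule const_near_differentiable[where c=0]) (simp add: fac_props(4) True less.prems)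
  next
    case False
    show ?thesis
    proof (rule differentiable_near)
      show "L t $$ (i,j) = ((X $$ (i,j) + t * Y $$ (i,j))
          - (\<Sum>k<j. D t $$ (k,k) * L t $$ (i,k) * L t $$ (j,k))) / D t $$ (j,j)"
        if "\<bar>t\<bar> < \<epsilon>" for t
        using multiplier_recurrence[OF that _ i] False by simp
      show "(\<lambda>t. ((X $$ (i,j) + t * Y $$ (i,j))
          - (\<Sum>k<j. D t $$ (k,k) * L t $$ (i,k) * L t $$ (j,k))) / D t $$ (j,j)) differentiable (at 0)"
        using sum_diff[OF i] XY_differentiable D_diff D0
        by (intro differentiable_divide differentiable_diff) auto
    qed
  qed
  then show ?case using D_diff by auto
qed

lemma L_differentiable: "a < n \<Longrightarrow> b < n \<Longrightarrow> (\<lambda>t. L t $$ (a,b)) differentiable (at 0)"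
  using column_differentiable by auto

lemma D_differentiable: "a < n \<Longrightarrow> b < n \<Longrightarrow> (\<lambda>t. D t $$ (a,b)) differentiable (at 0)"
proof (cases "a = b")
  case False
  assume "a < n" "b < n"
  show ?thesis
    by (rule const_near_differentiable[where c=0]) (simp add: fac_props(6) False \<open>a < n\<close> \<open>b < n\<close>)
qed (use column_differentiable in auto)

definition dL :: "nat \<Rightarrow> nat \<Rightarrow> real" where
  "dL p k = deriv (\<lambda>t. L t $$ (p,k)) 0"

definition dD :: "nat \<Rightarrow> real" where
  "dD k = deriv (\<lambda>t. D t $$ (k,k)) 0"

definition drank1 :: "nat \<Rightarrow> nat \<Rightarrow> nat \<Rightarrow> real" where
  "drank1 k p q = dD k * L 0 $$ (p,k) * L 0 $$ (q,k) + D 0 $$ (k,k) * dL p k * L 0 $$ (q,k)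
    + D 0 $$ (k,k) * L 0 $$ (p,k) * dL q k"

lemma drank1_sym: "drank1 k p q = drank1 k q p"
  unfolding drank1_def by (simp add: algebra_simps)

lemma has_dL: "a < n \<Longrightarrow> b < n \<Longrightarrow> ((\<lambda>t. L t $$ (a,b)) has_real_derivative dL a b) (at 0)"
  unfolding dL_def using L_differentiable DERIV_deriv_iff_real_differentiable by blast

lemma has_dD: "a < n \<Longrightarrow> ((\<lambda>t. D t $$ (a,a)) has_real_derivative dD a) (at 0)"
  unfolding dD_def using D_differentiable DERIV_deriv_iff_real_differentiable by blast

lemma has_drank1:
  assumes k: "k < n" and p: "p < n" and q: "q < n"
  shows "((\<lambda>t. D t $$ (k,k) * L t $$ (p,k) * L t $$ (q,k)) has_real_derivative drank1 k p q) (at 0)"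
proof -
  have "((\<lambda>t. D t $$ (k,k) * L t $$ (p,k) * L t $$ (q,k)) has_real_derivative
      (dD k * L 0 $$ (p,k) + dL p k * D 0 $$ (k,k)) * L 0 $$ (q,k) + dL q k * (D 0 $$ (k,k) * L 0 $$ (p,k)))
      (at 0)"
    by (rule DERIV_mult[OF DERIV_mult[OF has_dD[OF k] has_dL[OF p k]] has_dL[OF q k]])
  then show ?thesis unfolding drank1_def by (simp add: algebra_simps)
qed

lemma Y_sum_drank1:
  assumes p: "p < n" and q: "q < n"
  shows "Y $$ (p,q) = (\<Sum>k<n. drank1 k p q)"
proof -
  have "((\<lambda>t. \<Sum>k<n. D t $$ (k,k) * L t $$ (p,k) * L t $$ (q,k)) has_real_derivative Y $$ (p,q)) (at 0)"
    by (rule deriv_near[OF _ XY_deriv]) (rule factor_entry[OF _ p q, symmetric])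
  moreover have "((\<lambda>t. \<Sum>k<n. D t $$ (k,k) * L t $$ (p,k) * L t $$ (q,k))
      has_real_derivative (\<Sum>k<n. drank1 k p q)) (at 0)"
    using has_drank1 p q by (intro DERIV_sum) auto
  ultimately show ?thesis using DERIV_unique by blast
qed

lemma L_zero_near:
  assumes z: "\<And>t. \<bar>t\<bar> < \<epsilon> \<Longrightarrow> L t $$ (p,k) = 0" and p: "p < n" and k: "k < n"
  shows "L 0 $$ (p,k) = 0" "dL p k = 0"
proof -
  have "((\<lambda>t. L t $$ (p,k)) has_real_derivative 0) (at 0)" by (rule const_near(1)) (rule z)
  then show "dL p k = 0" using has_dL[OF p k] DERIV_unique by blast
  show "L 0 $$ (p,k) = 0" using z[of 0] eps by simp
qed

lemma drank1_zero:
  assumes "p < n" "q < n" "k < n" "p \<noteq> k" "p < k \<or> (p,k) \<notin> V"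
  shows "drank1 k p q = 0" "drank1 k q p = 0"
proof -
  have "L t $$ (p,k) = 0" if "\<bar>t\<bar> < \<epsilon>" for t using L_zero_outside assms(1,3-5) that by blast
  from L_zero_near[OF this assms(1,3)] show "drank1 k p q = 0" "drank1 k q p = 0"
    unfolding drank1_def by auto
qed

lemma L0_diag: "j < n \<Longrightarrow> L 0 $$ (j,j) = 1"
  using fac_props(3)[of 0 j] eps by auto

lemma dL_diag: "j < n \<Longrightarrow> dL j j = 0"
proof -
  assume j: "j < n"
  have "((\<lambda>t. L t $$ (j,j)) has_real_derivative 0) (at 0)"
    by (rule const_near(1)[where c=1]) (simp add: fac_props(3) j)
  then show ?thesis using has_dL[OF j j] DERIV_unique by blast
qed

lemma mderiv0_L: "p < n \<Longrightarrow> k < n \<Longrightarrow> mderiv0 L $$ (p,k) = dL p k"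
  unfolding mderiv0_def dL_def using fac_props(1)[of 0] eps by auto

lemma mderiv0_D: "k < n \<Longrightarrow> mderiv0 D $$ (k,k) = dD k"
  unfolding mderiv0_def dD_def using fac_props(2)[of 0] eps by auto

lemma Umat_dim: "Umat n V L D i t \<in> carrier_mat (card (Iset V i)) (card (Iset V i))"
  unfolding Umat_def msum_def by auto

lemma Umat_entry:
  assumes c: "c < card (Iset V i)" and e: "e < card (Iset V i)"
  shows "Umat n V L D i t $$ (c,e)
    = - (\<Sum>k\<in>subtree n V i. D t $$ (k,k) * L t $$ (idx (Iset V i) c, k) * L t $$ (idx (Iset V i) e, k))"
  using c e unfolding Umat_def msum_def subm_def by (auto simp: scalar_prod_def intro!: sum.cong)

lemma mderiv0_Umat:
  assumes i: "i < n"
  shows "mderiv0 (Umat n V L D i) \<in> carrier_mat (card (Iset V i)) (card (Iset V i))"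
    "\<And>c e. c < card (Iset V i) \<Longrightarrow> e < card (Iset V i) \<Longrightarrow> mderiv0 (Umat n V L D i) $$ (c,e)
        = - (\<Sum>k\<in>subtree n V i. drank1 k (idx (Iset V i) c) (idx (Iset V i) e))"
proof -
  show "mderiv0 (Umat n V L D i) \<in> carrier_mat (card (Iset V i)) (card (Iset V i))"
    using Umat_dim[of i 0] unfolding mderiv0_def carrier_mat_def by auto
  fix c e assume c: "c < card (Iset V i)" and e: "e < card (Iset V i)"
  let ?I = "Iset V i"
  have pq: "idx ?I c < n" "idx ?I e < n"
    using idx_in[OF Iset_finite[OF fil]] c e Iset_bound[OF fil] by blast+
  have "k < n" if "k \<in> subtree n V i" for k using subtree_le[OF fil that] i by simp
  then have "((\<lambda>t. Umat n V L D i t $$ (c,e)) has_real_derivative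
      - (\<Sum>k\<in>subtree n V i. drank1 k (idx ?I c) (idx ?I e))) (at 0)"
    unfolding Umat_entry[OF c e] using pq by (intro DERIV_minus DERIV_sum has_drank1) auto
  then show "mderiv0 (Umat n V L D i) $$ (c,e) = - (\<Sum>k\<in>subtree n V i. drank1 k (idx ?I c) (idx ?I e))"
    unfolding mderiv0_def using c e carrier_matD[OF Umat_dim[of i 0]] by (simp add: DERIV_imp_deriv)
qed

lemma Y_subtree:
  assumes j: "j < n" and p: "p < n" and q: "q < n" and pq: "p = j \<or> q = j"
  shows "Y $$ (p,q) = (\<Sum>k\<in>subtree n V j. drank1 k p q)"
proof -
  have row: "Y $$ (j,r) = (\<Sum>k\<in>subtree n V j. drank1 k j r)" if r: "r < n" for r
  proof -
    have "Y $$ (j,r) = (\<Sum>k<n. drank1 k j r)" using Y_sum_drank1[OF j r] .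
    also have "\<dots> = (\<Sum>k\<in>subtree n V j. drank1 k j r)"
    proof (rule sum.mono_neutral_right)
      show "\<forall>k\<in>{..<n} - subtree n V j. drank1 k j r = 0"
      proof
        fix k assume k: "k \<in> {..<n} - subtree n V j"
        then have "j \<noteq> k" using subtree_self by auto
        moreover have "j < k \<or> (j,k) \<notin> V" using nonzero_in_subtree[OF fil, of j k] k \<open>j \<noteq> k\<close> by auto
        ultimately show "drank1 k j r = 0" using drank1_zero(1)[of j r k] j r k by auto
      qed
    qed (use subtree_le[OF fil] j in \<open>fastforce+\<close>)
    finally show ?thesis .
  qed
  from pq show ?thesis
  proof
    assume "p = j" then show ?thesis using row[OF q] by simp
  next
    assume "q = j" then show ?thesis using row[OF p] Y_sym[OF j p] by (simp add: drank1_sym)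
  qed
qed

lemma drank1_child_outside:
  assumes j: "j < n" and c: "c \<in> children n V j" and p: "p \<in> Iplus V j" and q: "q \<in> Iplus V j"
    and out: "\<not> (p \<in> Iset V c \<and> q \<in> Iset V c)" and k: "k \<in> subtree n V c"
  shows "drank1 k p q = 0"
proof -
  have C: "c < j" "j \<in> Iset V c" using children_props[OF fil c] by auto
  have kc: "k \<le> c" using subtree_le[OF fil k] .
  have bound: "r < n \<and> j \<le> r" if "r \<in> Iplus V j" for r
    using that j unfolding Iplus_def by (auto dest: Iset_bound[OF fil])
  have nz: "(r,k) \<notin> V" if r: "r \<in> Iplus V j" "r \<notin> Iset V c" for r
  proof
    assume "(r,k) \<in> V"
    then have "r \<in> Iset V k" using bound[OF r(1)] kc C unfolding Iset_def by auto
    then have "r \<in> Iset V c" using Iset_descendant[OF fil k] bound[OF r(1)] C by auto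
    then show False using r by simp
  qed
  have "k < n" "p < n" "q < n" "k < p" "k < q" using bound p q kc C by fastforce+
  then show ?thesis using out nz p q drank1_zero[of p q k] drank1_zero[of q p k] by auto
qed

lemma frontal_rhs_entry:
  assumes j: "j < n" and a: "a < card (Iplus V j)" and b: "b < card (Iplus V j)"
  defines "p \<equiv> idx (Iplus V j) a" and "q \<equiv> idx (Iplus V j) b"
  shows "frontal_rhs n V L D j $$ (a,b)
    = drank1 j p q + (if 0 < a \<and> 0 < b then - (\<Sum>k\<in>subtree n V j. drank1 k p q) else 0)"
proof -
  let ?I = "Iset V j"
  have a': "a < Suc (card ?I)" and b': "b < Suc (card ?I)" using a b Iplus_enum[OF fil] by auto
  have pq: "p < n" "q < n"
    using idx_in[OF _ a] idx_in[OF _ b] j Iset_finite[OF fil] Iset_bound[OF fil]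
    unfolding p_def q_def Iplus_def by fastforce+
  have col: "(if x = 0 then M $$ (j,j) else subm M ?I {j} $$ (x-1,0)) = M $$ (idx (Iplus V j) x, j)"
    if "x < Suc (card ?I)" for x M using subm_column_Iplus[OF fil that] .
  have eL: "(if x = 0 then 1 else subm (L 0) ?I {j} $$ (x-1,0)) = L 0 $$ (idx (Iplus V j) x, j)"
    if "x < Suc (card ?I)" for x
    using col[OF that, of "L 0"] unfolding L0_diag[OF j] .
  have eL': "(if x = 0 then 0 else subm (mderiv0 L) ?I {j} $$ (x-1,0)) = dL (idx (Iplus V j) x) j"
    if "x < Suc (card ?I)" "idx (Iplus V j) x < n" for x
    using col[OF that(1), of "mderiv0 L"] unfolding mderiv0_L[OF that(2) j] mderiv0_L[OF j j] dL_diag[OF j] .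
  have eD: "subm (mderiv0 D) {j} {j} $$ (0,0) = dD j" using mderiv0_D[OF j] unfolding subm_def by simp
  have eU: "(if 0 < a \<and> 0 < b then mderiv0 (Umat n V L D j) $$ (a-1,b-1) else 0)
      = (if 0 < a \<and> 0 < b then - (\<Sum>k\<in>subtree n V j. drank1 k p q) else 0)"
    using mderiv0_Umat(2)[OF j, of "a-1" "b-1"] a' b' Iplus_enum(3)[OF fil]
    unfolding p_def q_def by (cases a; cases b) auto
  have column: "subm M ?I {j} \<in> carrier_mat (card ?I) 1" and pivot: "subm M {j} {j} \<in> carrier_mat 1 1"
    for M unfolding subm_def by auto
  show ?thesis
    unfolding frontal_rhs_def
      block_LDLt_entry[OF column column pivot mderiv0_Umat(1)[OF j] a' b'] eL[OF a'] eL[OF b'] eL'[OF a' pq(1)[unfolded p_def]] eL'[OF b' pq(2)[unfolded q_def]]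
    using pq eD eU unfolding p_def q_def drank1_def by (simp add: subm_def)
qed

lemma child_update_entry:
  assumes j: "j < n" and c: "c \<in> children n V j"
    and a: "a < card (Iplus V j)" and b: "b < card (Iplus V j)"
  defines "p \<equiv> idx (Iplus V j) a" and "q \<equiv> idx (Iplus V j) b"
  shows "(Emat (Iplus V j) (Iset V c) * mderiv0 (Umat n V L D c)
           * transpose_mat (Emat (Iplus V j) (Iset V c))) $$ (a,b)
    = - (\<Sum>k\<in>subtree n V c. drank1 k p q)"
proof -
  have cn: "c < n" using children_props[OF fil c] j by simp
  have pq: "p \<in> Iplus V j" "q \<in> Iplus V j"
    using idx_in[OF Iplus_finite[OF fil] a] idx_in[OF Iplus_finite[OF fil] b] unfolding p_def q_def .
  have "(Emat (Iplus V j) (Iset V c) * mderiv0 (Umat n V L D c)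
           * transpose_mat (Emat (Iplus V j) (Iset V c))) $$ (a,b)
      = (if p \<in> Iset V c \<and> q \<in> Iset V c then - (\<Sum>k\<in>subtree n V c. drank1 k p q) else 0)"
    unfolding p_def q_def
    by (rule extend_add_entry[OF Iset_finite[OF fil] mderiv0_Umat(1)[OF cn] mderiv0_Umat(2)[OF cn] a b])
  moreover have "(\<Sum>k\<in>subtree n V c. drank1 k p q) = 0" if "\<not> (p \<in> Iset V c \<and> q \<in> Iset V c)"
    using drank1_child_outside[OF j c pq that] by (intro sum.neutral) blast
  ultimately show ?thesis by auto
qed

lemma Y_border_entry:
  assumes j: "j < n" and a: "a < card (Iplus V j)" and b: "b < card (Iplus V j)"
  defines "p \<equiv> idx (Iplus V j) a" and "q \<equiv> idx (Iplus V j) b"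
  shows "four_block_mat (subm Y {j} {j}) (transpose_mat (subm Y (Iset V j) {j}))
      (subm Y (Iset V j) {j}) (0\<^sub>m (card (Iset V j)) (card (Iset V j))) $$ (a,b)
    = (if a = 0 \<or> b = 0 then Y $$ (p,q) else 0)"
proof -
  let ?I = "Iset V j"
  have a': "a < Suc (card ?I)" and b': "b < Suc (card ?I)" using a b Iplus_enum[OF fil] by auto
  have q: "q < n"
    using idx_in[OF _ b] j Iset_finite[OF fil] Iset_bound[OF fil]
    unfolding q_def Iplus_def by fastforce
  have "four_block_mat (subm Y {j} {j}) (transpose_mat (subm Y ?I {j}))
      (subm Y ?I {j}) (0\<^sub>m (card ?I) (card ?I)) $$ (a,b)
    = (if a = 0 then (if b = 0 then Y $$ (j,j) else Y $$ (q,j)) else (if b = 0 then Y $$ (p,j) else 0))"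
    using a' b' Iplus_enum(3)[OF fil] unfolding p_def q_def
    by (cases a; cases b) (simp_all add: subm_def)
  moreover have "a = 0 \<Longrightarrow> p = j" "b = 0 \<Longrightarrow> q = j"
    using Iplus_enum(2)[OF fil] unfolding p_def q_def by auto
  ultimately show ?thesis using Y_sym[OF j q] by auto
qed

lemma frontal_lhs_entry:
  assumes j: "j < n" and a: "a < card (Iplus V j)" and b: "b < card (Iplus V j)"
  defines "p \<equiv> idx (Iplus V j) a" and "q \<equiv> idx (Iplus V j) b"
  shows "frontal_lhs n V Y L D j $$ (a,b)
    = (if a = 0 \<or> b = 0 then Y $$ (p,q) else 0) - (\<Sum>k\<in>subtree n V j - {j}. drank1 k p q)"
proof -
  let ?I = "Iset V j"
  have "msum (card (Iplus V j)) (children n V j)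
      (\<lambda>i. Emat (Iplus V j) (Iset V i) * mderiv0 (Umat n V L D i)
             * transpose_mat (Emat (Iplus V j) (Iset V i))) $$ (a,b)
      = (\<Sum>c\<in>children n V j. - (\<Sum>k\<in>subtree n V c. drank1 k p q))"
    unfolding msum_def p_def q_def using a b child_update_entry[OF j _ a b] by auto
  also have "\<dots> = - (\<Sum>k\<in>subtree n V j - {j}. drank1 k p q)"
    by (simp add: sum_subtree_children[OF fil] sum_negf)
  finally have children: "msum (card (Iplus V j)) (children n V j)
      (\<lambda>i. Emat (Iplus V j) (Iset V i) * mderiv0 (Umat n V L D i)
             * transpose_mat (Emat (Iplus V j) (Iset V i))) $$ (a,b)
      = - (\<Sum>k\<in>subtree n V j - {j}. drank1 k p q)" .
  have "frontal_lhs n V Y L D j $$ (a,b)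
      = four_block_mat (subm Y {j} {j}) (transpose_mat (subm Y ?I {j}))
          (subm Y ?I {j}) (0\<^sub>m (card ?I) (card ?I)) $$ (a,b)
        + msum (card (Iplus V j)) (children n V j)
          (\<lambda>i. Emat (Iplus V j) (Iset V i) * mderiv0 (Umat n V L D i)
             * transpose_mat (Emat (Iplus V j) (Iset V i))) $$ (a,b)"
    unfolding frontal_lhs_def
    by (rule index_add_mat(1)) (use a b Iplus_enum(1)[OF fil] in \<open>simp_all add: msum_def\<close>)
  then show ?thesis unfolding Y_border_entry[OF j a b] children p_def q_def by simp
qed

lemma frontal_identity:
  assumes j: "j < n"
  shows "frontal_lhs n V Y L D j = frontal_rhs n V L D j"
proof (rule eq_matI)
  show dims: "dim_row (frontal_lhs n V Y L D j) = dim_row (frontal_rhs n V L D j)"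
    "dim_col (frontal_lhs n V Y L D j) = dim_col (frontal_rhs n V L D j)"
    unfolding frontal_lhs_def frontal_rhs_def by (simp_all add: msum_def Iplus_enum(1)[OF fil])
  fix a b
  assume "a < dim_row (frontal_rhs n V L D j)" and "b < dim_col (frontal_rhs n V L D j)"
  then have a: "a < card (Iplus V j)" and b: "b < card (Iplus V j)"
    unfolding frontal_rhs_def using Iplus_enum(1)[OF fil] by simp_all
  define p q where "p = idx (Iplus V j) a" and "q = idx (Iplus V j) b"
  have pq: "p < n" "q < n"
    using idx_in[OF Iplus_finite[OF fil] a] idx_in[OF Iplus_finite[OF fil] b] j Iset_bound[OF fil]
    unfolding p_def q_def Iplus_def by auto
  have split: "(\<Sum>k\<in>subtree n V j. drank1 k p q) = drank1 j p q + (\<Sum>k\<in>subtree n V j - {j}. drank1 k p q)"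
    by (rule sum.remove) (auto simp: subtree_finite[OF fil] subtree_self)
  show "frontal_lhs n V Y L D j $$ (a,b) = frontal_rhs n V L D j $$ (a,b)"
  proof (cases "a = 0 \<or> b = 0")
    case True
    then have "p = j \<or> q = j" using Iplus_enum(2)[OF fil] unfolding p_def q_def by auto
    then have "Y $$ (p,q) = (\<Sum>k\<in>subtree n V j. drank1 k p q)" using Y_subtree[OF j pq] by blast
    then show ?thesis
      using frontal_lhs_entry[OF j a b] frontal_rhs_entry[OF j a b] True split
      unfolding p_def q_def by auto
  next
    case False
    then show ?thesis
      using frontal_lhs_entry[OF j a b] frontal_rhs_entry[OF j a b] split
      unfolding p_def q_def by auto
  qed
qed

end

theorem mainTheorem5:
  fixes n :: nat and V :: "(nat \<times> nat) set" and X Y :: "real mat"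
    and L D :: "real \<Rightarrow> real mat" and \<epsilon> :: real
  assumes "filled n V"
    and "in_SV n V X" and "pos_def n X" and "in_SV n V Y"
    and "\<epsilon> > 0"
    and "\<And>t. \<bar>t\<bar> < \<epsilon> \<Longrightarrow> unit_lower_tri n (L t) \<and> pos_diag n (D t) \<and>
                         X + t \<cdot>\<^sub>m Y = L t * D t * transpose_mat (L t)"
  shows "(\<forall>a<n. \<forall>b<n. (\<lambda>t. L t $$ (a,b)) differentiable (at 0)
                   \<and> (\<lambda>t. D t $$ (a,b)) differentiable (at 0)) \<and>
    (\<forall>j<n.
      four_block_mat (subm Y {j} {j}) (transpose_mat (subm Y (Iset V j) {j}))
                     (subm Y (Iset V j) {j}) (0\<^sub>m (card (Iset V j)) (card (Iset V j)))
      + msum (card (Iplus V j)) (children n V j)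
          (\<lambda>i. Emat (Iplus V j) (Iset V i) * mderiv0 (Umat n V L D i)
                 * transpose_mat (Emat (Iplus V j) (Iset V i)))
      = four_block_mat (1\<^sub>m 1) (0\<^sub>m 1 (card (Iset V j)))
                       (subm (L 0) (Iset V j) {j}) (1\<^sub>m (card (Iset V j)))
        * four_block_mat (subm (mderiv0 D) {j} {j})
                         ((D 0 $$ (j,j)) \<cdot>\<^sub>m transpose_mat (subm (mderiv0 L) (Iset V j) {j}))
                         ((D 0 $$ (j,j)) \<cdot>\<^sub>m subm (mderiv0 L) (Iset V j) {j})
                         (mderiv0 (Umat n V L D j))
        * four_block_mat (1\<^sub>m 1) (transpose_mat (subm (L 0) (Iset V j) {j}))
                         (0\<^sub>m (card (Iset V j)) 1) (1\<^sub>m (card (Iset V j))))"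
proof -
  interpret ldl_family n V X Y L D \<epsilon>
    by (rule ldl_family.intro) (use assms in auto)
  show ?thesis
    using L_differentiable D_differentiable frontal_identity
    unfolding frontal_lhs_def frontal_rhs_def by blast
qed

end
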